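(* Let $S=\{(e^{it},0)\in\mathbb{C}^2:t\in\mathbb{R}\}$ and let $U=\{z\in\mathbb{C}^2:\operatorname{dist}(z,S)<1/10\}$ be its open $1/10$-tubular neighborhood, and let $p=(9/10,0)\in\partial U$. Then there is no holomorphic automorphism $\psi\in\operatorname{Aut}(\mathbb{C}^2)$ such that $\psi(p)$ is a spherically-extreme boundary point of $\psi(U)$.
   Context: A boundary point $p\in\partial\Omega$ of a domain $\Omega\subset\mathbb{C}^n$ is called spherically-extreme if (1) $\partial\Omega$ is $\mathcal{C}^2$-smooth in an open neighborhood of $p$, and (2) there is a Euclidean ball $\mathbb{B}^n(c;R)=\{z:\|z-c\|<R\}$ with $\Omega\subset\mathbb{B}^n(c;R)$ and $p\in\partial\Omega\cap\partial\mathbb{B}^n(c;R)$. $\operatorname{Aut}(\mathbb{C}^2)$ denotes the group of biholomorphic self-maps of $\mathbb{C}^2$. *)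

theory Defs
  imports "HOL-Analysis.Analysis"
begin

text \<open>We model \<open>\<complex>\<^sup>2\<close> as \<open>complex \<times> complex\<close>; its product norm/metric is the Euclidean one.\<close>

definition cscale2 :: "complex \<Rightarrow> complex \<times> complex \<Rightarrow> complex \<times> complex" where
  "cscale2 c w = (c * fst w, c * snd w)"

definition holomorphic2 :: "(complex \<times> complex \<Rightarrow> complex \<times> complex) \<Rightarrow> bool" where
  "holomorphic2 f \<longleftrightarrow> (\<forall>z. \<exists>D. (f has_derivative D) (at z) \<and>
        (\<forall>c w. D (cscale2 c w) = cscale2 c (D w)))"

definition aut_C2 :: "(complex \<times> complex \<Rightarrow> complex \<times> complex) \<Rightarrow> bool" where
  "aut_C2 f \<longleftrightarrow> bij f \<and> holomorphic2 f \<and> holomorphic2 (inv f)"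

definition C2_on :: "(complex \<times> complex) set \<Rightarrow> (complex \<times> complex \<Rightarrow> real)
     \<Rightarrow> (complex \<times> complex \<Rightarrow> complex \<times> complex \<Rightarrow> real)
     \<Rightarrow> (complex \<times> complex \<Rightarrow> complex \<times> complex \<Rightarrow> complex \<times> complex \<Rightarrow> real) \<Rightarrow> bool" where
  "C2_on V \<rho> D1 D2 \<longleftrightarrow>
     (\<forall>x\<in>V. (\<rho> has_derivative D1 x) (at x) \<and>
             (\<forall>v. ((\<lambda>y. D1 y v) has_derivative D2 x v) (at x))) \<and>
     (\<forall>v w. continuous_on V (\<lambda>y. D2 y v w))"

definition C2_boundary_near :: "(complex \<times> complex) set \<Rightarrow> complex \<times> complex \<Rightarrow> bool" where
  "C2_boundary_near \<Omega> p \<longleftrightarrow>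
     (\<exists>V \<rho> D1 D2. open V \<and> p \<in> V \<and> C2_on V \<rho> D1 D2 \<and>
        \<Omega> \<inter> V = {x\<in>V. \<rho> x < 0} \<and>
        (\<forall>x\<in>V. \<rho> x = 0 \<longrightarrow> D1 x \<noteq> (\<lambda>v. 0)))"

definition spherically_extreme :: "(complex \<times> complex) set \<Rightarrow> complex \<times> complex \<Rightarrow> bool" where
  "spherically_extreme \<Omega> p \<longleftrightarrow> p \<in> frontier \<Omega> \<and> C2_boundary_near \<Omega> p \<and>
     (\<exists>c R. \<Omega> \<subseteq> ball c R \<and> p \<in> frontier (ball c R))"

definition circleS :: "(complex \<times> complex) set" where
  "circleS = {(exp (\<i> * complex_of_real t), 0) | t. True}"

definition tubeU :: "(complex \<times> complex) set" where
  "tubeU = {z. infdist z circleS < 1/10}"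

end

theory Submission
  imports Defs "HOL-Complex_Analysis.Conformal_Mappings"
begin

text \<open>The unit circle of the complex line \<open>\<complex> \<times> {0}\<close> lies in \<open>U\<close>, so if \<open>\<psi>(U) \<subseteq> B(c, R)\<close> the
  holomorphic disc \<open>\<zeta> \<mapsto> \<psi>(\<zeta>, 0)\<close>, \<open>|\<zeta>| \<le> 1\<close>, has its boundary in the ball. Such a disc lies
  entirely in the open ball: if \<open>u = \<psi>(\<zeta>, 0) - c\<close> had \<open>|u| \<ge> R\<close>, the entire function
  \<open>z \<mapsto> \<langle>\<psi>(z, 0) - c, u\<rangle>\<close> would have modulus \<open>< R|u| \<le> |u|\<^sup>2\<close> on the circle but \<open>|u|\<^sup>2\<close> at \<open>\<zeta>\<close>,
  contradicting the maximum modulus principle. So \<open>\<psi>(9/10, 0)\<close> cannot lie on the sphere \<open>\<partial>B(c, R)\<close>.\<close>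

definition cinner2 :: "complex \<times> complex \<Rightarrow> complex \<times> complex \<Rightarrow> complex" where
  "cinner2 u w = cnj (fst u) * fst w + cnj (snd u) * snd w"

lemma cinner2_self: "cinner2 u u = of_real ((norm u)\<^sup>2)"
proof -
  have "cinner2 u u = of_real ((norm (fst u))\<^sup>2 + (norm (snd u))\<^sup>2)"
    by (simp only: cinner2_def of_real_add complex_norm_square mult.commute)
  then show ?thesis
    by (simp add: norm_prod_def)
qed

lemma norm_cinner2_le: "norm (cinner2 u w) \<le> norm u * norm w"
proof -
  have "norm (cinner2 u w) \<le> norm (fst u) * norm (fst w) + norm (snd u) * norm (snd w)"
    unfolding cinner2_def by (rule order_trans[OF norm_triangle_ineq]) (simp add: norm_mult)
  also have "\<dots> = inner (norm (fst u), norm (snd u)) (norm (fst w), norm (snd w))"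
    by simp
  also have "\<dots> \<le> norm (norm (fst u), norm (snd u)) * norm (norm (fst w), norm (snd w))"
    by (rule norm_cauchy_schwarz)
  also have "\<dots> = norm u * norm w"
    by (simp add: norm_Pair norm_prod_def)
  finally show ?thesis .
qed

lemma holomorphic2_on_complex_line:
  assumes "holomorphic2 f"
  shows "(\<lambda>z. fst (f (a + cscale2 z v))) holomorphic_on UNIV"
    and "(\<lambda>z. snd (f (a + cscale2 z v))) holomorphic_on UNIV"
proof -
  have "\<exists>d. ((\<lambda>z. f (a + cscale2 z v)) has_derivative (\<lambda>t. cscale2 t d)) (at z)" for z
  proof -
    obtain D where D: "(f has_derivative D) (at (a + cscale2 z v))"
      and D_clinear: "\<And>c w. D (cscale2 c w) = cscale2 c (D w)"
      using assms unfolding holomorphic2_def by blast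
    have "((\<lambda>z. a + cscale2 z v) has_derivative (\<lambda>t. cscale2 t v)) (at z)"
      unfolding cscale2_def by (auto intro!: derivative_eq_intros)
    from has_derivative_compose[OF this D] show ?thesis
      by (intro exI[of _ "D v"]) (simp add: D_clinear)
  qed
  then have "(\<lambda>z. fst (f (a + cscale2 z v))) field_differentiable at z \<and>
             (\<lambda>z. snd (f (a + cscale2 z v))) field_differentiable at z" for z
    unfolding field_differentiable_def has_field_derivative_def cscale2_def
    by (force dest: has_derivative_fst has_derivative_snd simp: mult.commute)
  then show "(\<lambda>z. fst (f (a + cscale2 z v))) holomorphic_on UNIV"
    and "(\<lambda>z. snd (f (a + cscale2 z v))) holomorphic_on UNIV"
    by (auto simp: holomorphic_on_def field_differentiable_at_within)
qed

lemma maximum_modulus_frontier_strict: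
  fixes f :: "complex \<Rightarrow> complex"
  assumes "f holomorphic_on interior S" and "continuous_on (closure S) f" and "bounded S"
    and "\<And>z. z \<in> frontier S \<Longrightarrow> norm (f z) < B" and "\<xi> \<in> S"
  shows "norm (f \<xi>) < B"
proof -
  have "frontier S \<noteq> {}"
    using assms(3,5) frontier_eq_empty[of S] not_bounded_UNIV by blast
  moreover have "continuous_on (frontier S) (\<lambda>z. norm (f z))"
    using assms(2) by (metis Diff_subset frontier_def continuous_on_norm continuous_on_subset)
  ultimately obtain z0 where "z0 \<in> frontier S"
    and "\<And>z. z \<in> frontier S \<Longrightarrow> norm (f z) \<le> norm (f z0)"
    using continuous_attains_sup[OF compact_frontier_bounded[OF assms(3)]] by blast
  then have "norm (f \<xi>) \<le> norm (f z0)"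
    using maximum_modulus_frontier[OF assms(1-3)] assms(5) by blast
  also have "norm (f z0) < B"
    using assms(4) \<open>z0 \<in> frontier S\<close> .
  finally show ?thesis .
qed

lemma unit_circle_in_tubeU:
  assumes "norm z = 1"
  shows "(z, 0) \<in> tubeU"
proof -
  have "z \<noteq> 0"
    using assms by auto
  then have "z = exp (\<i> * of_real (Arg z))"
    using Arg_eq[of z] assms by simp
  then have "(z, 0) \<in> circleS"
    unfolding circleS_def by blast
  then show ?thesis
    unfolding tubeU_def by simp
qed

lemma holomorphic2_disc_in_ball:
  assumes hol: "holomorphic2 f"
    and boundary: "\<And>z. norm z = 1 \<Longrightarrow> f (a + cscale2 z v) \<in> ball c R"
    and "norm \<zeta> \<le> 1"
  shows "f (a + cscale2 \<zeta> v) \<in> ball c R"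
proof (rule ccontr)
  let ?g = "\<lambda>z. f (a + cscale2 z v)"
  assume "?g \<zeta> \<notin> ball c R"
  define u where "u = ?g \<zeta> - c"
  have "R > 0"
    using boundary[of 1] by (auto intro: le_less_trans[OF zero_le_dist])
  moreover have "R \<le> norm u"
    using \<open>?g \<zeta> \<notin> ball c R\<close> by (simp add: u_def dist_norm norm_minus_commute)
  ultimately have "norm u > 0"
    by linarith
  define h where "h z = cinner2 u (?g z - c)" for z
  have hol_h: "h holomorphic_on UNIV"
    using holomorphic2_on_complex_line[OF hol, of a v]
    unfolding h_def cinner2_def by (auto intro!: holomorphic_intros)
  have "norm (h \<zeta>) < norm u * R"
  proof (rule maximum_modulus_frontier_strict[of h "cball 0 1"])
    show "h holomorphic_on interior (cball 0 1)"
      using hol_h by (rule holomorphic_on_subset) simp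
    show "continuous_on (closure (cball 0 1)) h"
      using holomorphic_on_imp_continuous_on[OF hol_h] by (rule continuous_on_subset) simp
    fix z :: complex
    assume "z \<in> frontier (cball 0 1)"
    then have "norm (?g z - c) < R"
      using boundary[of z] by (simp add: dist_norm norm_minus_commute)
    then have "norm u * norm (?g z - c) < norm u * R"
      using \<open>norm u > 0\<close> by simp
    then show "norm (h z) < norm u * R"
      using norm_cinner2_le[of u "?g z - c"] unfolding h_def by linarith
  qed (use \<open>norm \<zeta> \<le> 1\<close> in simp_all)
  also have "\<dots> \<le> norm u * norm u"
    using \<open>R \<le> norm u\<close> \<open>norm u > 0\<close> by simp
  also have "\<dots> = norm (h \<zeta>)"
    by (simp add: h_def u_def[symmetric] cinner2_self power2_eq_square norm_mult)
  finally show False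
    by simp
qed

theorem mainTheorem6:
  shows "\<not> (\<exists>\<psi>. aut_C2 \<psi> \<and> spherically_extreme (\<psi> ` tubeU) (\<psi> (9/10, 0)))"
proof
  assume "\<exists>\<psi>. aut_C2 \<psi> \<and> spherically_extreme (\<psi> ` tubeU) (\<psi> (9/10, 0))"
  then obtain \<psi> c R where hol: "holomorphic2 \<psi>" and sub: "\<psi> ` tubeU \<subseteq> ball c R"
    and touch: "\<psi> (9/10, 0) \<in> frontier (ball c R)"
    unfolding aut_C2_def spherically_extreme_def by blast
  have on_line: "0 + cscale2 z (1, 0) = (z, 0)" for z
    by (simp add: cscale2_def)
  have "\<psi> (0 + cscale2 (9/10) (1, 0)) \<in> ball c R"
  proof (rule holomorphic2_disc_in_ball[OF hol])
    fix z :: complex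
    assume "norm z = 1"
    then show "\<psi> (0 + cscale2 z (1, 0)) \<in> ball c R"
      unfolding on_line by (intro subsetD[OF sub] imageI unit_circle_in_tubeU)
  qed (simp add: norm_divide)
  then show False
    using touch unfolding on_line by (simp add: frontier_def)
qed

end
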